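(* Let $H$ be an infinite-dimensional separable complex Hilbert space with orthonormal basis $(e_i)_{i\in\mathbb{N}}$, and let $D=\sum_{i\in\mathbb{N}}\lambda_i\, e_i\otimes e_i$ be a (possibly unbounded) diagonal operator with $\lambda_i\neq\lambda_j$ for all $i\neq j$. Suppose that $\sigma(D)=\overline{\{\lambda_i:i\in\mathbb{N}\}}$ is a perfect set. Then there exist $u,v\in H$ such that $\sigma_p(D+u\otimes v)=\emptyset$. Moreover, for every $\delta>0$, $u,v$ can be chosen so that in addition $\|u\otimes v\|<\delta$.
   Context: For $u,v\in H$, $u\otimes v$ denotes the bounded rank one operator $h\mapsto\langle h,v\rangle u$. The (possibly unbounded) diagonal operator $D$ is defined on the domain $\{x\in H:\sum_i|\lambda_i|^2|\langle x,e_i\rangle|^2<\infty\}$ by $Dx=\sum_i\lambda_i\langle x,e_i\rangle e_i$; $D+u\otimes v$ has the same domain. $\sigma$ denotes the spectrum and $\sigma_p$ the point spectrum (set of eigenvalues). A set is perfect if it has no isolated points. *)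

theory Defs
  imports "HOL-Analysis.Analysis"
begin

text \<open>The separable infinite-dimensional Hilbert space H with orthonormal basis (e_i)
  is modelled by its coordinates: H = l^2(N) of complex sequences, e_i = indicator of i.\<close>

definition l2 :: "(nat \<Rightarrow> complex) set" where
  "l2 = {x. summable (\<lambda>i. (cmod (x i))^2)}"

definition l2norm :: "(nat \<Rightarrow> complex) \<Rightarrow> real" where
  "l2norm x = sqrt (\<Sum>i. (cmod (x i))^2)"

definition l2inner :: "(nat \<Rightarrow> complex) \<Rightarrow> (nat \<Rightarrow> complex) \<Rightarrow> complex" where
  "l2inner x y = (\<Sum>i. x i * cnj (y i))"

definition rank_one :: "(nat \<Rightarrow> complex) \<Rightarrow> (nat \<Rightarrow> complex) \<Rightarrow> (nat \<Rightarrow> complex) \<Rightarrow> (nat \<Rightarrow> complex)" where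
  "rank_one u v = (\<lambda>h i. l2inner h v * u i)"

definition opnorm :: "((nat \<Rightarrow> complex) \<Rightarrow> (nat \<Rightarrow> complex)) \<Rightarrow> real" where
  "opnorm T = Sup {l2norm (T h) | h. h \<in> l2 \<and> l2norm h \<le> 1}"

definition diag_dom :: "(nat \<Rightarrow> complex) \<Rightarrow> (nat \<Rightarrow> complex) set" where
  "diag_dom lam = {x \<in> l2. summable (\<lambda>i. (cmod (lam i))^2 * (cmod (x i))^2)}"

definition diag_op :: "(nat \<Rightarrow> complex) \<Rightarrow> (nat \<Rightarrow> complex) \<Rightarrow> (nat \<Rightarrow> complex)" where
  "diag_op lam x = (\<lambda>i. lam i * x i)"

definition point_spectrum :: "(nat \<Rightarrow> complex) set \<Rightarrow> ((nat \<Rightarrow> complex) \<Rightarrow> (nat \<Rightarrow> complex)) \<Rightarrow> complex set" where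
  "point_spectrum Dom T = {\<mu>. \<exists>x\<in>Dom. x \<noteq> (\<lambda>_. 0) \<and> T x = (\<lambda>i. \<mu> * x i)}"

definition perfect_set :: "complex set \<Rightarrow> bool" where
  "perfect_set S \<longleftrightarrow> closed S \<and> (\<forall>z\<in>S. z islimpt S)"

end

theory Submission
  imports Defs
begin

text \<open>Put \<open>u i = 2^-i\<close> and choose \<open>v\<close> with \<open>u i * cnj (v i) = w i\<close>. An eigenvector of
  \<open>D + u \<otimes> v\<close> for an eigenvalue \<open>m\<close> is a multiple of \<open>(D - m)^-1 u\<close>; so \<open>m\<close> is no \<open>lam i\<close>,
  \<open>u i / (lam i - m)\<close> is square summable, and the secular function \<open>1 + (\<Sum>i. w i / (lam i - m))\<close>
  vanishes at \<open>m\<close>. We take \<open>w i\<close> to be the residue at \<open>lam i\<close> of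
  \<open>F z = (\<Prod>k. 1 + ep k / (lam k - z))\<close>, so that by partial fractions the secular function is \<open>F\<close>,
  whose zeros are exactly the points \<open>lam k + ep k\<close>. Baire's theorem in the perfect set
  \<open>closure (range lam)\<close> lets us place each of these points arbitrarily close to \<open>lam k\<close> and
  within \<open>2^-i\<close> of \<open>lam i\<close> for infinitely many \<open>i\<close>; there \<open>u i / (lam i - m)\<close> is not square
  summable, so there is no eigenvalue at all. Keeping \<open>ep k\<close> small compared with the gaps between
  the \<open>lam i\<close> makes \<open>w i = O(eta * 4^-i)\<close>, hence \<open>u \<otimes> v\<close> has norm \<open>O(eta)\<close>.\<close>

text \<open>The residue at \<open>lam i\<close> of the rational function \<open>z \<mapsto> (\<Prod>k<N. 1 + ep k / (lam k - z))\<close>.\<close>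

definition partial_residue :: "(nat \<Rightarrow> complex) \<Rightarrow> (nat \<Rightarrow> complex) \<Rightarrow> nat \<Rightarrow> nat \<Rightarrow> complex" where
  "partial_residue lam ep N i = ep i * (\<Prod>k<N. if k = i then 1 else 1 + ep k / (lam k - lam i))"

lemma partial_fraction_step:
  fixes a L m r e :: complex
  assumes "a \<noteq> m" "L \<noteq> m" "L \<noteq> a"
  shows "r / (a - m) * (e / (L - m)) = r * (e / (L - a)) / (a - m) + e * (r / (a - L)) / (L - m)"
proof -
  have "L - m \<noteq> 0" "a - m \<noteq> 0" "L - a \<noteq> 0" "a - L \<noteq> 0" using assms by auto
  then show ?thesis by (simp add: divide_simps) (simp add: algebra_simps)
qed

lemma prod_eq_partial_fractions:
  assumes "inj lam" "m \<notin> lam ` {..<N}"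
  shows "(\<Prod>k<N. 1 + ep k / (lam k - m)) = 1 + (\<Sum>i<N. partial_residue lam ep N i / (lam i - m))"
  using assms(2)
proof (induction N arbitrary: m)
  case 0
  then show ?case by simp
next
  case (Suc N)
  let ?r = "partial_residue lam ep"
  have m_notin: "m \<notin> lam ` {..<N}" and lam_N: "lam N \<noteq> m" using Suc.prems by auto
  have lam_N_notin: "lam N \<notin> lam ` {..<N}" using assms(1) by (auto dest: injD)
  have old: "?r (Suc N) i = ?r N i * (1 + ep N / (lam N - lam i))" if "i < N" for i
    using that by (simp add: partial_residue_def)
  have new: "?r (Suc N) N = ep N * (1 + (\<Sum>i<N. ?r N i / (lam i - lam N)))"
  proof -
    have "(\<Prod>k<N. if k = N then 1 else 1 + ep k / (lam k - lam N)) = (\<Prod>k<N. 1 + ep k / (lam k - lam N))"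
      by (rule prod.cong) auto
    then show ?thesis
      using Suc.IH[OF lam_N_notin] by (simp add: partial_residue_def)
  qed
  have "(\<Prod>k<Suc N. 1 + ep k / (lam k - m)) = (1 + (\<Sum>i<N. ?r N i / (lam i - m))) * (1 + ep N / (lam N - m))"
    using Suc.IH[OF m_notin] by simp
  also have "\<dots> = 1 + (\<Sum>i<N. ?r N i / (lam i - m)) + ep N / (lam N - m)
      + (\<Sum>i<N. ?r N i / (lam i - m) * (ep N / (lam N - m)))"
    by (simp only: distrib_left distrib_right sum_distrib_right mult_1_left mult_1_right add.assoc)
  also have "(\<Sum>i<N. ?r N i / (lam i - m) * (ep N / (lam N - m))) =
      (\<Sum>i<N. ?r N i * (ep N / (lam N - lam i)) / (lam i - m) + ep N * (?r N i / (lam i - lam N)) / (lam N - m))"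
  proof (intro sum.cong refl partial_fraction_step)
    fix i assume i: "i \<in> {..<N}"
    show "lam i \<noteq> m" using i m_notin by auto
    show "lam N \<noteq> m" by fact
    show "lam N \<noteq> lam i" using i assms(1) by (auto dest: injD)
  qed
  also have "1 + (\<Sum>i<N. ?r N i / (lam i - m)) + ep N / (lam N - m) + \<dots> =
     1 + ((\<Sum>i<N. ?r (Suc N) i / (lam i - m)) + ?r (Suc N) N / (lam N - m))"
    by (simp add: old new sum.distrib algebra_simps sum_distrib_left sum_divide_distrib add_divide_distrib)
  finally show ?case by simp
qed

lemma islimpt_range_frequently_near:
  fixes f :: "nat \<Rightarrow> 'a::metric_space"
  assumes "z islimpt range f" "e > 0"
  shows "\<exists>\<^sub>F i in sequentially. dist (f i) z < e"
  unfolding frequently_sequentially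
proof
  fix N
  have "infinite (range f \<inter> ball z e)" using assms by (simp add: islimpt_eq_infinite_ball)
  then have "\<not> range f \<inter> ball z e \<subseteq> f ` {..<N}" using finite_subset by blast
  then obtain i where "f i \<in> ball z e" "i \<notin> {..<N}" by blast
  then have "i \<ge> N" "dist (f i) z < e" by (auto simp: dist_commute)
  then show "\<exists>i\<ge>N. dist (f i) z < e" by blast
qed

lemma dense_fast_limit_points:
  fixes lam :: "nat \<Rightarrow> complex"
  assumes inj: "inj lam" and perfect: "perfect_set (closure (range lam))"
    and a: "a \<in> closure (range lam)" and r: "r > 0"
  obtains z where "z \<notin> range lam" "cmod (z - a) < r"
    "\<exists>\<^sub>F i in sequentially. cmod (z - lam i) < (1/2)^i"
proof -
  define K where "K = closure (range lam)"
  define U where "U N = K \<inter> ((\<Union>i\<in>{N..}. ball (lam i) ((1/2)^i)) - {lam N})" for N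
  have "openin (top_of_set K) (U N)" for N
    unfolding U_def by (intro openin_open_Int open_Diff) auto
  moreover have "K \<subseteq> closure (U N)" for N
  proof
    fix z assume "z \<in> K"
    then have limpt: "z islimpt range lam"
      using perfect unfolding perfect_set_def K_def by (simp add: limpt_of_closure)
    show "z \<in> closure (U N)"
    proof (rule iffD2[OF closure_approachable], intro allI impI)
      fix e :: real assume "e > 0"
      then obtain i where i: "i \<ge> Suc N" "dist (lam i) z < e"
        using islimpt_range_frequently_near[OF limpt] unfolding frequently_sequentially by blast
      moreover have "lam i \<noteq> lam N" using i(1) inj by (auto dest: injD)
      then have "lam i \<in> U N"
        unfolding U_def K_def using i by (auto simp: closure_subset[THEN subsetD] intro!: bexI[of _ i])
      ultimately show "\<exists>y\<in>U N. dist y z < e" by blast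
    qed
  qed
  ultimately have "K \<subseteq> closure (\<Inter>(range U))"
    by (intro Baire) (auto simp: K_def)
  then obtain z where z: "z \<in> \<Inter>(range U)" "dist z a < r"
    using a r by (force simp: K_def closure_approachable)
  have "z \<notin> range lam"
    using z(1) unfolding U_def by auto
  moreover have "\<exists>\<^sub>F i in sequentially. cmod (z - lam i) < (1/2)^i"
    unfolding frequently_sequentially
  proof
    fix N from z(1) have "z \<in> U N" by auto
    then obtain i where "i \<ge> N" "dist (lam i) z < (1/2)^i" unfolding U_def by auto
    thus "\<exists>i\<ge>N. cmod (z - lam i) < (1/2)^i" by (auto simp: dist_norm norm_minus_commute)
  qed
  ultimately show ?thesis using z(2) that by (auto simp: dist_norm)
qed

lemma fast_limit_point_not_summable:
  fixes lam :: "nat \<Rightarrow> complex"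
  assumes "z \<notin> range lam" and "\<exists>\<^sub>F i in sequentially. cmod (z - lam i) < (1/2)^i"
  shows "\<not> summable (\<lambda>i. (1/4::real)^i / (cmod (lam i - z))^2)"
proof
  assume "summable (\<lambda>i. (1/4::real)^i / (cmod (lam i - z))^2)"
  from summable_LIMSEQ_zero[OF this] have "\<forall>\<^sub>F i in sequentially. (1/4::real)^i / (cmod (lam i - z))^2 < 1"
    by (rule order_tendstoD) simp
  with assms(2) obtain i where i: "cmod (z - lam i) < (1/2)^i" "(1/4::real)^i / (cmod (lam i - z))^2 < 1"
    using frequently_eventually_frequently frequently_ex by blast
  have pos: "0 < cmod (lam i - z)" using assms(1) by auto
  have "(cmod (lam i - z))^2 < ((1/2)^i)^2"
    using i(1) pos by (intro power_strict_mono) (auto simp: norm_minus_commute)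
  also have "\<dots> = (1/4::real)^i" by (simp add: power_mult_distrib[symmetric] power2_eq_square)
  finally show False using i(2) pos by simp
qed

definition gap :: "(nat \<Rightarrow> complex) \<Rightarrow> nat \<Rightarrow> real" where
  "gap lam i = Min (insert 1 ((\<lambda>k. cmod (lam k - lam i)) ` {..<i}))"

text \<open>The factor \<open>exp (- i / gap lam i)\<close> compensates the bound \<open>exp (i / gap lam i + 2)\<close> on the
  finite products in \<open>partial_residue\<close>, see \<open>norm_partial_residue_le\<close>.\<close>

definition perturbation_radius :: "(nat \<Rightarrow> complex) \<Rightarrow> real \<Rightarrow> nat \<Rightarrow> real" where
  "perturbation_radius lam eta i = eta * (1/4)^i * gap lam i * exp (- (real i / gap lam i))"

lemma gap_pos: "inj lam \<Longrightarrow> 0 < gap lam i"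
  unfolding gap_def by (subst Min_gr_iff) (auto dest: injD)

lemma gap_le_1: "gap lam i \<le> 1"
  unfolding gap_def by (rule Min_le) auto

lemma gap_le_dist: "k < i \<Longrightarrow> gap lam i \<le> cmod (lam k - lam i)"
  unfolding gap_def by (rule Min_le) auto

lemma perturbation_radius_pos: "inj lam \<Longrightarrow> 0 < eta \<Longrightarrow> 0 < perturbation_radius lam eta i"
  unfolding perturbation_radius_def using gap_pos[of lam i] by simp

lemma perturbation_radius_le:
  assumes "inj lam" "0 < eta" "eta \<le> 1"
  shows "perturbation_radius lam eta i \<le> (1/4)^i * gap lam i"
proof -
  have "0 < gap lam i" "exp (- (real i / gap lam i)) \<le> 1"
    using gap_pos[OF assms(1), of i] by auto
  then have "perturbation_radius lam eta i \<le> 1 * (1/4)^i * gap lam i * 1"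
    unfolding perturbation_radius_def using assms by (intro mult_mono) auto
  then show ?thesis by simp
qed

lemma divide_le_add_divide_square:
  fixes q d :: real
  assumes "0 \<le> q" "0 < d"
  shows "q / d \<le> q + q / d^2"
proof (cases "d \<ge> 1")
  case True
  then have "q / d \<le> q" using assms by (simp add: divide_le_eq mult_le_cancel_left1 mult_left_le)
  then show ?thesis using assms by (simp add: add_increasing2)
next
  case False
  then have "q / d \<le> q / d^2" using assms
    by (intro divide_left_mono) (auto simp: power2_eq_square mult_le_cancel_right1 mult_right_le_one_le)
  then show ?thesis using assms by simp
qed

locale small_perturbation =
  fixes lam ep :: "nat \<Rightarrow> complex" and eta :: real
  assumes inj_lam: "inj lam"
    and eta_pos: "0 < eta" and eta_le_1: "eta \<le> 1"
    and norm_ep_le: "\<And>k. cmod (ep k) \<le> perturbation_radius lam eta k"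
    and perturbed_notin: "\<And>k. lam k + ep k \<notin> range lam"
begin

definition residue_factor :: "nat \<Rightarrow> nat \<Rightarrow> complex" where
  "residue_factor i k = (if k = i then 1 else 1 + ep k / (lam k - lam i))"

definition residue :: "nat \<Rightarrow> complex" where
  "residue i = ep i * prodinf (residue_factor i)"

lemma ep_nonzero: "ep k \<noteq> 0"
  using perturbed_notin[of k] by auto

lemma norm_ep_le_quarter_power: "cmod (ep k) \<le> (1/4)^k"
proof -
  have "cmod (ep k) \<le> (1/4)^k * gap lam k"
    using norm_ep_le perturbation_radius_le[OF inj_lam eta_pos eta_le_1] order_trans by blast
  also have "\<dots> \<le> (1/4)^k" using gap_le_1[of lam k] by (simp add: mult_left_le)
  finally show ?thesis .
qed

lemma norm_ep_ratio_before:
  assumes "k < i" shows "cmod (ep k / (lam k - lam i)) \<le> 1 / gap lam i"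
proof -
  have "cmod (ep k) \<le> 1" using norm_ep_le_quarter_power[of k] by (simp add: power_le_one order_trans)
  then show ?thesis
    using gap_pos[OF inj_lam, of i] gap_le_dist[OF assms, of lam] by (simp add: norm_divide frac_le)
qed

lemma norm_ep_ratio_after:
  assumes "i < k" shows "cmod (ep k / (lam k - lam i)) \<le> (1/4)^k"
proof -
  have gap: "0 < gap lam k" "gap lam k \<le> cmod (lam k - lam i)"
    using gap_pos[OF inj_lam] gap_le_dist[OF assms, of lam] by (auto simp: norm_minus_commute)
  have "cmod (ep k / (lam k - lam i)) \<le> ((1/4)^k * gap lam k) / gap lam k"
    unfolding norm_divide using norm_ep_le[of k] perturbation_radius_le[OF inj_lam eta_pos eta_le_1, of k] gap
    by (intro frac_le) auto
  also have "\<dots> = (1/4)^k" using gap by simp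
  finally show ?thesis .
qed

lemma norm_residue_factor_le:
  "cmod (residue_factor i k) \<le> exp ((if k < i then 1 / gap lam i else 0) + (1/2)^k)"
proof -
  let ?t = "(if k < i then 1 / gap lam i else 0) + (1/2::real)^k"
  have "cmod (residue_factor i k) \<le> 1 + ?t"
  proof (cases k i rule: linorder_cases)
    case less
    have "cmod (residue_factor i k) \<le> 1 + 1 / gap lam i"
      using norm_triangle_ineq[of 1 "ep k / (lam k - lam i)"] norm_ep_ratio_before[OF less] less
      by (simp add: residue_factor_def)
    also have "\<dots> \<le> 1 + ?t" using less by simp
    finally show ?thesis .
  next
    case greater
    have "cmod (residue_factor i k) \<le> 1 + (1/4)^k"
      using norm_triangle_ineq[of 1 "ep k / (lam k - lam i)"] norm_ep_ratio_after[OF greater] greater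
      by (simp add: residue_factor_def)
    also have "\<dots> \<le> 1 + ?t" using greater by (simp add: power_mono)
    finally show ?thesis .
  qed (simp add: residue_factor_def)
  then show ?thesis using exp_ge_add_one_self[of ?t] by linarith
qed

lemma norm_prod_residue_factor_le: "cmod (\<Prod>k<N. residue_factor i k) \<le> exp (real i / gap lam i + 2)"
proof -
  have "(\<Sum>k<N. if k < i then 1 / gap lam i else 0) = real (card ({..<N} \<inter> {k. k < i})) / gap lam i"
    by (simp add: sum.If_cases)
  also have "\<dots> \<le> real i / gap lam i"
    using gap_pos[OF inj_lam, of i] card_mono[of "{..<i}" "{..<N} \<inter> {k. k < i}"]
    by (intro divide_right_mono) auto
  moreover have "(\<Sum>k<N. (1/2::real)^k) \<le> (\<Sum>k. (1/2)^k)"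
    by (rule sum_le_suminf) (auto simp: summable_geometric)
  moreover have "(\<Sum>k. (1/2::real)^k) = 2"
    using suminf_geometric[of "1/2::real"] by simp
  ultimately have exponent_le:
    "(\<Sum>k<N. (if k < i then 1 / gap lam i else 0) + (1/2)^k) \<le> real i / gap lam i + 2"
    unfolding sum.distrib by linarith
  have "cmod (\<Prod>k<N. residue_factor i k) \<le> (\<Prod>k<N. exp ((if k < i then 1 / gap lam i else 0) + (1/2)^k))"
    unfolding prod_norm[symmetric] by (intro prod_mono) (simp add: norm_residue_factor_le)
  also have "\<dots> = exp (\<Sum>k<N. (if k < i then 1 / gap lam i else 0) + (1/2)^k)"
    by (simp add: exp_sum)
  also have "\<dots> \<le> exp (real i / gap lam i + 2)"
    using exponent_le by simp
  finally show ?thesis .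
qed

lemma partial_residue_eq: "partial_residue lam ep N i = ep i * (\<Prod>k<N. residue_factor i k)"
  unfolding partial_residue_def residue_factor_def by simp

lemma norm_partial_residue_le: "cmod (partial_residue lam ep N i) \<le> eta * exp 2 * (1/4)^i"
proof -
  have gap: "0 < gap lam i" "gap lam i \<le> 1" using gap_pos[OF inj_lam] gap_le_1 by auto
  have "cmod (partial_residue lam ep N i) \<le> perturbation_radius lam eta i * exp (real i / gap lam i + 2)"
    unfolding partial_residue_eq norm_mult
    using norm_ep_le[of i] norm_prod_residue_factor_le[of i N]
      perturbation_radius_pos[OF inj_lam eta_pos, of i]
    by (intro mult_mono) auto
  also have "\<dots> \<le> (eta * (1/4)^i * exp (- (real i / gap lam i))) * exp (real i / gap lam i + 2)"
    unfolding perturbation_radius_def using gap eta_pos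
    by (intro mult_right_mono) (auto intro!: mult_right_le_one_le)
  also have "\<dots> = eta * exp 2 * (1/4)^i"
    by (simp add: exp_add exp_minus field_simps)
  finally show ?thesis .
qed

lemma residue_factor_nonzero: "residue_factor i k \<noteq> 0"
proof (cases "k = i")
  case False
  then have "lam k - lam i \<noteq> 0" using inj_lam by (auto dest: injD)
  moreover have "lam k + ep k - lam i \<noteq> 0" using perturbed_notin[of k] by auto
  ultimately show ?thesis
    using False by (simp add: residue_factor_def field_simps)
qed (simp add: residue_factor_def)

lemma residue_factor_convergent: "convergent_prod (residue_factor i)"
proof -
  have "summable (\<lambda>k. norm (residue_factor i k - 1))"
  proof (rule summable_comparison_test_ev)
    show "summable (\<lambda>k. (1/4::real)^k)" by (simp add: summable_geometric)
    show "\<forall>\<^sub>F k in sequentially. norm (norm (residue_factor i k - 1)) \<le> (1/4)^k"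
      unfolding eventually_sequentially
      using norm_ep_ratio_after by (intro exI[of _ "Suc i"]) (simp add: residue_factor_def)
  qed
  then show ?thesis
    by (intro abs_convergent_prod_imp_convergent_prod summable_imp_abs_convergent_prod)
qed

lemma partial_residue_tendsto: "(\<lambda>N. partial_residue lam ep N i) \<longlonglongrightarrow> residue i"
  unfolding partial_residue_eq residue_def
  using convergent_prod_LIMSEQ[OF residue_factor_convergent] LIMSEQ_lessThan_iff_atMost
  by (intro tendsto_mult tendsto_const) blast

lemma residue_nonzero: "residue i \<noteq> 0"
  unfolding residue_def
  using ep_nonzero prodinf_nonzero[OF residue_factor_convergent residue_factor_nonzero] by simp

lemma norm_residue_le: "cmod (residue i) \<le> eta * exp 2 * (1/4)^i"
  using norm_partial_residue_le by (intro LIMSEQ_le_const2[OF tendsto_norm[OF partial_residue_tendsto]]) simp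

context
  fixes m :: complex
  assumes m_notin: "m \<notin> range lam"
    and summable_m: "summable (\<lambda>i. (1/4::real)^i / (cmod (lam i - m))^2)"
begin

lemma summable_majorant: "summable (\<lambda>i. (1/4::real)^i + (1/4)^i / (cmod (lam i - m))^2)"
  by (intro summable_add summable_m) (simp add: summable_geometric)

lemma quarter_power_div_le_majorant: "(1/4::real)^i / cmod (lam i - m) \<le> (1/4)^i + (1/4)^i / (cmod (lam i - m))^2"
  using m_notin by (intro divide_le_add_divide_square) auto

lemma perturbation_product_convergent: "convergent_prod (\<lambda>k. 1 + ep k / (lam k - m))"
proof -
  have "norm (norm (1 + ep k / (lam k - m) - 1)) \<le> (1/4)^k + (1/4)^k / (cmod (lam k - m))^2" for k
  proof -
    have "norm (norm (1 + ep k / (lam k - m) - 1)) = cmod (ep k) / cmod (lam k - m)"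
      by (simp add: norm_divide)
    also have "\<dots> \<le> (1/4)^k / cmod (lam k - m)"
      using norm_ep_le_quarter_power by (intro divide_right_mono) auto
    finally show ?thesis using quarter_power_div_le_majorant[of k] by linarith
  qed
  then have "summable (\<lambda>k. norm (1 + ep k / (lam k - m) - 1))"
    by (intro summable_comparison_test'[OF summable_majorant])
  then show ?thesis
    by (intro abs_convergent_prod_imp_convergent_prod summable_imp_abs_convergent_prod)
qed

lemma partial_residue_series_tendsto:
  shows "summable (\<lambda>k. norm (residue k / (lam k - m)))"
    and "(\<lambda>n. \<Sum>k<n. partial_residue lam ep n k / (lam k - m)) \<longlonglongrightarrow> (\<Sum>k. residue k / (lam k - m))"
proof -
  define a where "a k n = (if k < n then partial_residue lam ep n k / (lam k - m) else 0)" for k n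
  define M where "M k = eta * exp 2 * ((1/4)^k + (1/4)^k / (cmod (lam k - m))^2)" for k
  have a_le: "norm (a k n) \<le> M k" for k n
  proof -
    have "norm (a k n) \<le> eta * exp 2 * ((1/4)^k / cmod (lam k - m))"
      unfolding a_def using norm_partial_residue_le[of n k] eta_pos
      by (auto simp: norm_divide intro!: divide_right_mono)
    also have "\<dots> \<le> M k"
      unfolding M_def using quarter_power_div_le_majorant[of k] eta_pos by (intro mult_left_mono) auto
    finally show ?thesis .
  qed
  have summable_M: "summable M"
    unfolding M_def by (intro summable_mult summable_majorant)
  have a_tendsto: "(\<lambda>n. a k n) \<longlonglongrightarrow> residue k / (lam k - m)" for k
  proof (rule Lim_transform_eventually)
    show "(\<lambda>n. partial_residue lam ep n k / (lam k - m)) \<longlonglongrightarrow> residue k / (lam k - m)"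
      by (intro tendsto_divide tendsto_const partial_residue_tendsto) (use m_notin in auto)
    show "\<forall>\<^sub>F n in sequentially. partial_residue lam ep n k / (lam k - m) = a k n"
      unfolding eventually_sequentially a_def by (intro exI[of _ "Suc k"]) auto
  qed
  have "(\<forall>\<^sub>F n in sequentially. summable (\<lambda>k. norm (a k n))) \<and>
      summable (\<lambda>k. norm (residue k / (lam k - m))) \<and>
      (\<lambda>n. \<Sum>k. a k n) \<longlonglongrightarrow> (\<Sum>k. residue k / (lam k - m))"
    by (rule tannerys_theorem[OF a_tendsto _ summable_M]) (auto intro!: always_eventually simp: a_le)
  moreover have "(\<Sum>k. a k n) = (\<Sum>k<n. partial_residue lam ep n k / (lam k - m))" for n
    by (subst suminf_finite[of "{..<n}"]) (auto simp: a_def)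
  ultimately show "summable (\<lambda>k. norm (residue k / (lam k - m)))"
    and "(\<lambda>n. \<Sum>k<n. partial_residue lam ep n k / (lam k - m)) \<longlonglongrightarrow> (\<Sum>k. residue k / (lam k - m))"
    by simp_all
qed

lemma residue_series_eq_product:
  shows "summable (\<lambda>i. residue i / (lam i - m))"
    and "1 + (\<Sum>i. residue i / (lam i - m)) = (\<Prod>k. 1 + ep k / (lam k - m))"
proof -
  show "summable (\<lambda>i. residue i / (lam i - m))"
    using partial_residue_series_tendsto(1) by (rule summable_norm_cancel)
  have "(\<lambda>n. \<Prod>k<n. 1 + ep k / (lam k - m)) \<longlonglongrightarrow> 1 + (\<Sum>k. residue k / (lam k - m))"
    using partial_residue_series_tendsto(2) m_notin
    by (simp add: prod_eq_partial_fractions[OF inj_lam] tendsto_add_const_iff image_iff)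
  moreover have "(\<lambda>n. \<Prod>k<n. 1 + ep k / (lam k - m)) \<longlonglongrightarrow> (\<Prod>k. 1 + ep k / (lam k - m))"
    using convergent_prod_LIMSEQ[OF perturbation_product_convergent] LIMSEQ_lessThan_iff_atMost by blast
  ultimately show "1 + (\<Sum>i. residue i / (lam i - m)) = (\<Prod>k. 1 + ep k / (lam k - m))"
    by (rule LIMSEQ_unique)
qed

lemma residue_series_nonzero:
  assumes "\<And>k. lam k + ep k \<noteq> m"
  shows "1 + (\<Sum>i. residue i / (lam i - m)) \<noteq> 0"
proof -
  have "1 + ep k / (lam k - m) \<noteq> 0" for k
  proof -
    have "lam k - m \<noteq> 0" using m_notin by auto
    then show ?thesis using assms[of k] by (simp add: field_simps)
  qed
  then show ?thesis
    unfolding residue_series_eq_product(2) by (rule prodinf_nonzero[OF perturbation_product_convergent])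
qed

end

end

lemma diag_rank_one_eigenvector_eq:
  fixes lam x u :: "nat \<Rightarrow> complex" and c m :: complex
  assumes eq: "\<And>i. lam i * x i + c * u i = m * x i" and "c \<noteq> 0" and u_nonzero: "\<And>i. u i \<noteq> 0"
  shows "m \<notin> range lam" and "x i = - c * (u i / (lam i - m))"
proof -
  show m_notin: "m \<notin> range lam"
  proof
    assume "m \<in> range lam"
    then obtain k where "m = lam k" by auto
    then have "c * u k = 0" using eq[of k] by simp
    then show False using \<open>c \<noteq> 0\<close> u_nonzero[of k] by simp
  qed
  have "lam i - m \<noteq> 0" using m_notin by auto
  moreover have "x i * (lam i - m) = - c * u i" using eq[of i] by (simp add: algebra_simps)
  ultimately show "x i = - c * (u i / (lam i - m))" by (simp add: field_simps)
qed

lemma point_spectrum_diag_rank_one_empty: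
  assumes inj: "inj lam"
    and uv_nonzero: "\<And>i. u i * cnj (v i) \<noteq> 0"
    and secular_nonzero: "\<And>m. m \<notin> range lam \<Longrightarrow> summable (\<lambda>i. (cmod (u i / (lam i - m)))^2) \<Longrightarrow>
      summable (\<lambda>i. u i * cnj (v i) / (lam i - m)) \<and> 1 + (\<Sum>i. u i * cnj (v i) / (lam i - m)) \<noteq> 0"
  shows "point_spectrum (diag_dom lam) (\<lambda>x i. diag_op lam x i + rank_one u v x i) = {}"
proof (rule ccontr)
  assume "point_spectrum (diag_dom lam) (\<lambda>x i. diag_op lam x i + rank_one u v x i) \<noteq> {}"
  then obtain m x where x: "x \<in> diag_dom lam" "x \<noteq> (\<lambda>_. 0)"
    and eigen: "(\<lambda>i. diag_op lam x i + rank_one u v x i) = (\<lambda>i. m * x i)"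
    unfolding point_spectrum_def by blast
  define c where "c = l2inner x v"
  have eq: "lam i * x i + c * u i = m * x i" for i
    using fun_cong[OF eigen, of i] by (simp add: diag_op_def rank_one_def c_def)
  obtain j where "x j \<noteq> 0" using x(2) by auto
  show False
  proof (cases "c = 0")
    case True
    have "x i = 0" if "i \<noteq> j" for i
      using eq[of i] eq[of j] \<open>x j \<noteq> 0\<close> True that inj by (auto dest: injD)
    then have "c = x j * cnj (v j)"
      unfolding c_def l2inner_def by (subst suminf_finite[of "{j}"]) auto
    then show False using True \<open>x j \<noteq> 0\<close> uv_nonzero[of j] by simp
  next
    case False
    have u_nonzero: "u i \<noteq> 0" for i
      using uv_nonzero[of i] by auto
    have m_notin: "m \<notin> range lam" and x_eq: "\<And>i. x i = - c * (u i / (lam i - m))"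
      using diag_rank_one_eigenvector_eq[of lam x c u m, OF eq False u_nonzero] by blast+
    have "summable (\<lambda>i. (1 / (cmod c)^2) * (cmod (x i))^2)"
      using x(1) by (intro summable_mult) (simp add: diag_dom_def l2_def)
    also have "(\<lambda>i. (1 / (cmod c)^2) * (cmod (x i))^2) = (\<lambda>i. (cmod (u i / (lam i - m)))^2)"
      using False by (simp add: x_eq norm_mult norm_divide power_mult_distrib power_divide)
    finally have secular: "summable (\<lambda>i. u i * cnj (v i) / (lam i - m))"
        "1 + (\<Sum>i. u i * cnj (v i) / (lam i - m)) \<noteq> 0"
      using secular_nonzero[OF m_notin] by auto
    have "c = (\<Sum>i. x i * cnj (v i))"
      by (simp add: c_def l2inner_def)
    also have "\<dots> = (\<Sum>i. - c * (u i * cnj (v i) / (lam i - m)))"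
      by (simp add: x_eq mult_ac)
    also have "\<dots> = - c * (\<Sum>i. u i * cnj (v i) / (lam i - m))"
      by (rule suminf_mult[OF secular(1)])
    finally have "c * (1 + (\<Sum>i. u i * cnj (v i) / (lam i - m))) = 0"
      by (simp add: distrib_left eq_neg_iff_add_eq_0)
    then show False using False secular(2) by simp
  qed
qed

lemma l2norm_nonneg: "x \<in> l2 \<Longrightarrow> 0 \<le> l2norm x"
  unfolding l2_def l2norm_def by (simp add: suminf_nonneg)

lemma l2inner_norm_le:
  assumes "x \<in> l2" "y \<in> l2"
  shows "cmod (l2inner x y) \<le> l2norm x * l2norm y"
proof -
  have sx: "summable (\<lambda>i. (cmod (x i))^2)" and sy: "summable (\<lambda>i. (cmod (y i))^2)"
    using assms by (auto simp: l2_def)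
  have partial_le: "(\<Sum>i<n. cmod (x i) * cmod (y i)) \<le> l2norm x * l2norm y" for n
  proof -
    have "(\<Sum>i<n. cmod (x i) * cmod (y i))^2 \<le> (\<Sum>i<n. (cmod (x i))^2) * (\<Sum>i<n. (cmod (y i))^2)"
      by (rule Cauchy_Schwarz_ineq_sum)
    also have "\<dots> \<le> (\<Sum>i. (cmod (x i))^2) * (\<Sum>i. (cmod (y i))^2)"
      using sx sy by (intro mult_mono sum_le_suminf sum_nonneg suminf_nonneg) auto
    finally show ?thesis
      unfolding l2norm_def real_sqrt_mult[symmetric]
      by (intro real_le_rsqrt)
  qed
  have summable: "summable (\<lambda>i. norm (x i * cnj (y i)))"
    using partial_le by (intro summableI_nonneg_bounded[where x = "l2norm x * l2norm y"]) (auto simp: norm_mult)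
  have "cmod (l2inner x y) \<le> (\<Sum>i. norm (x i * cnj (y i)))"
    unfolding l2inner_def by (rule summable_norm[OF summable])
  also have "\<dots> \<le> l2norm x * l2norm y"
    using partial_le by (intro suminf_le_const[OF summable]) (simp add: norm_mult)
  finally show ?thesis .
qed

lemma l2_scale: "x \<in> l2 \<Longrightarrow> (\<lambda>i. c * x i) \<in> l2"
  unfolding l2_def by (simp add: norm_mult power_mult_distrib summable_mult)

lemma l2norm_scale:
  assumes "x \<in> l2"
  shows "l2norm (\<lambda>i. c * x i) = cmod c * l2norm x"
proof -
  have "(\<Sum>i. (cmod (c * x i))^2) = (cmod c)^2 * (\<Sum>i. (cmod (x i))^2)"
    using assms unfolding l2_def norm_mult power_mult_distrib by (intro suminf_mult) simp
  then show ?thesis by (simp add: l2norm_def real_sqrt_mult)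
qed

lemma l2_dominated:
  assumes "y \<in> l2" "\<And>i. cmod (x i) \<le> cmod (y i)"
  shows "x \<in> l2" and "l2norm x \<le> l2norm y"
proof -
  have le: "(cmod (x i))^2 \<le> (cmod (y i))^2" for i using assms(2) by (simp add: power_mono)
  then show "x \<in> l2"
    using assms(1) unfolding l2_def by (auto intro: summable_comparison_test')
  then show "l2norm x \<le> l2norm y"
    using assms(1) le unfolding l2_def l2norm_def by (simp add: suminf_le)
qed

lemma opnorm_rank_one_le:
  assumes "u \<in> l2" "v \<in> l2"
  shows "opnorm (rank_one u v) \<le> l2norm u * l2norm v"
  unfolding opnorm_def
proof (rule cSup_least)
  show "{l2norm (rank_one u v h) |h. h \<in> l2 \<and> l2norm h \<le> 1} \<noteq> {}"
    using exI[of "\<lambda>h. h \<in> l2 \<and> l2norm h \<le> 1" "\<lambda>_. 0"] by (auto simp: l2_def l2norm_def)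
next
  fix t assume "t \<in> {l2norm (rank_one u v h) |h. h \<in> l2 \<and> l2norm h \<le> 1}"
  then obtain h where h: "h \<in> l2" "l2norm h \<le> 1" and t: "t = l2norm (rank_one u v h)" by auto
  have "t = cmod (l2inner h v) * l2norm u"
    unfolding t rank_one_def by (rule l2norm_scale[OF assms(1)])
  also have "\<dots> \<le> (l2norm h * l2norm v) * l2norm u"
    using l2inner_norm_le[OF h(1) assms(2)] l2norm_nonneg[OF assms(1)] by (rule mult_right_mono)
  also have "\<dots> \<le> l2norm u * l2norm v"
    using h l2norm_nonneg[OF h(1)] l2norm_nonneg[OF assms(1)] l2norm_nonneg[OF assms(2)]
    by (simp add: mult_left_le_one_le mult_ac)
  finally show "t \<le> l2norm u * l2norm v" .
qed

definition geometric_vector :: "nat \<Rightarrow> complex" where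
  "geometric_vector i = complex_of_real ((1/2)^i)"

lemma norm_geometric_vector: "cmod (geometric_vector i) = (1/2)^i"
  unfolding geometric_vector_def by (simp only: norm_of_real) simp

lemma square_norm_geometric_vector: "(cmod (geometric_vector i))^2 = (1/4)^i"
  by (simp add: norm_geometric_vector power_mult_distrib[symmetric] power2_eq_square)

lemma geometric_vector_l2: "geometric_vector \<in> l2" "(l2norm geometric_vector)^2 = 4/3"
proof -
  have "summable (\<lambda>i. (1/4::real)^i)" "(\<Sum>i. (1/4::real)^i) = 4/3"
    using summable_geometric[of "1/4::real"] suminf_geometric[of "1/4::real"] by simp_all
  then show "geometric_vector \<in> l2" "(l2norm geometric_vector)^2 = 4/3"
    by (simp_all only: l2_def l2norm_def mem_Collect_eq square_norm_geometric_vector) simp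
qed

lemma geometric_rank_one_factorization:
  assumes w_le: "\<And>i. cmod (w i) \<le> C * (1/4)^i"
  obtains v where "v \<in> l2" "\<And>i. geometric_vector i * cnj (v i) = w i"
    "opnorm (rank_one geometric_vector v) \<le> 4/3 * C"
proof -
  let ?u = geometric_vector
  define v where "v i = cnj (w i / ?u i)" for i
  define c where "c = complex_of_real C"
  have "0 \<le> C" using order_trans[OF norm_ge_zero w_le[of 0]] by simp
  then have norm_c: "cmod c = C"
    unfolding c_def norm_of_real by simp
  have u_nonzero: "?u i \<noteq> 0" for i
    using norm_geometric_vector[of i] by auto
  have v_le: "cmod (v i) \<le> cmod (c * ?u i)" for i
  proof -
    have "cmod (v i) = cmod (w i) / (1/2)^i" by (simp add: v_def norm_divide norm_geometric_vector)
    also have "\<dots> \<le> C * (1/4)^i / (1/2)^i"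
      by (intro divide_right_mono w_le) simp
    also have "\<dots> = C * (1/2)^i"
    proof -
      have "(1/4::real)^i = (1/2)^i * (1/2)^i" by (simp flip: power_mult_distrib)
      then show ?thesis by simp
    qed
    also have "\<dots> = cmod (c * ?u i)"
      by (simp add: norm_c norm_mult norm_geometric_vector)
    finally show ?thesis .
  qed
  have u_l2: "?u \<in> l2" by (rule geometric_vector_l2(1))
  then have cu_l2: "(\<lambda>i. c * ?u i) \<in> l2" by (rule l2_scale)
  have v_l2: "v \<in> l2"
    using l2_dominated(1)[OF cu_l2 v_le] .
  have "opnorm (rank_one ?u v) \<le> l2norm ?u * l2norm v"
    using u_l2 v_l2 by (rule opnorm_rank_one_le)
  also have "\<dots> \<le> l2norm ?u * (C * l2norm ?u)"
    using l2_dominated(2)[OF cu_l2 v_le] l2norm_scale[OF u_l2, of c] norm_c l2norm_nonneg[OF u_l2]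
    by (intro mult_left_mono) simp_all
  also have "\<dots> = 4/3 * C"
    using geometric_vector_l2(2) by (simp add: power2_eq_square mult_ac)
  finally have opnorm_le: "opnorm (rank_one ?u v) \<le> 4/3 * C" .
  have uv: "?u i * cnj (v i) = w i" for i
    using u_nonzero[of i] by (simp add: v_def)
  show ?thesis by (rule that[OF v_l2 uv opnorm_le])
qed

lemma exists_rank_one_perturbation_without_eigenvalues:
  fixes lam :: "nat \<Rightarrow> complex" and eta :: real
  assumes inj: "inj lam" and perfect: "perfect_set (closure (range lam))"
    and eta: "0 < eta" "eta \<le> 1"
  obtains u v where "u \<in> l2" "v \<in> l2"
    "point_spectrum (diag_dom lam) (\<lambda>x i. diag_op lam x i + rank_one u v x i) = {}"
    "opnorm (rank_one u v) \<le> 4/3 * (eta * exp 2)"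
proof -
  have "\<exists>z. z \<notin> range lam \<and> cmod (z - lam k) < perturbation_radius lam eta k \<and>
      (\<exists>\<^sub>F i in sequentially. cmod (z - lam i) < (1/2)^i)" for k
    by (rule dense_fast_limit_points[OF inj perfect closure_subset[THEN subsetD, OF rangeI]
          perturbation_radius_pos[OF inj eta(1)]]) blast
  then obtain zeta where zeta_notin: "\<And>k. zeta k \<notin> range lam"
    and zeta_near: "\<And>k. cmod (zeta k - lam k) < perturbation_radius lam eta k"
    and zeta_fast: "\<And>k. \<exists>\<^sub>F i in sequentially. cmod (zeta k - lam i) < (1/2)^i"
    by metis
  define ep where "ep k = zeta k - lam k" for k
  interpret small_perturbation lam ep eta
    using inj eta zeta_notin zeta_near by unfold_locales (auto simp: ep_def less_imp_le)
  obtain v where v_l2: "v \<in> l2" and uv: "\<And>i. geometric_vector i * cnj (v i) = residue i"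
    and opnorm_le: "opnorm (rank_one geometric_vector v) \<le> 4/3 * (eta * exp 2)"
    using geometric_rank_one_factorization[OF norm_residue_le] by blast
  have "point_spectrum (diag_dom lam) (\<lambda>x i. diag_op lam x i + rank_one geometric_vector v x i) = {}"
  proof (rule point_spectrum_diag_rank_one_empty[OF inj])
    show "geometric_vector i * cnj (v i) \<noteq> 0" for i
      using residue_nonzero by (simp add: uv)
    fix m assume m_notin: "m \<notin> range lam"
      and "summable (\<lambda>i. (cmod (geometric_vector i / (lam i - m)))^2)"
    then have summable_m: "summable (\<lambda>i. (1/4::real)^i / (cmod (lam i - m))^2)"
      by (simp only: norm_divide power_divide square_norm_geometric_vector)
    txt \<open>The zeros \<open>lam k + ep k = zeta k\<close> of the product are excluded: there \<open>(D - m)^-1 u\<close> is not in \<open>l2\<close>.\<close>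
    have "lam k + ep k \<noteq> m" for k
      using fast_limit_point_not_summable[OF zeta_notin zeta_fast] summable_m by (auto simp: ep_def)
    then show "summable (\<lambda>i. geometric_vector i * cnj (v i) / (lam i - m))
        \<and> 1 + (\<Sum>i. geometric_vector i * cnj (v i) / (lam i - m)) \<noteq> 0"
      using residue_series_eq_product(1)[OF m_notin summable_m] residue_series_nonzero[OF m_notin summable_m]
      by (simp add: uv)
  qed
  then show ?thesis
    by (rule that[OF geometric_vector_l2(1) v_l2 _ opnorm_le])
qed

theorem theorem4:
  fixes lam :: "nat \<Rightarrow> complex"
  assumes "inj lam"
    and "perfect_set (closure (range lam))"
  shows "(\<exists>u\<in>l2. \<exists>v\<in>l2.
            point_spectrum (diag_dom lam) (\<lambda>x i. diag_op lam x i + rank_one u v x i) = {})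
       \<and> (\<forall>\<delta>>0. \<exists>u\<in>l2. \<exists>v\<in>l2.
            point_spectrum (diag_dom lam) (\<lambda>x i. diag_op lam x i + rank_one u v x i) = {}
            \<and> opnorm (rank_one u v) < \<delta>)"
proof (intro conjI allI impI)
  obtain u v where "u \<in> l2" "v \<in> l2"
    "point_spectrum (diag_dom lam) (\<lambda>x i. diag_op lam x i + rank_one u v x i) = {}"
    using exists_rank_one_perturbation_without_eigenvalues[OF assms zero_less_one order_refl] by blast
  then show "\<exists>u\<in>l2. \<exists>v\<in>l2. point_spectrum (diag_dom lam) (\<lambda>x i. diag_op lam x i + rank_one u v x i) = {}"
    by blast
next
  fix \<delta> :: real assume "\<delta> > 0"
  define eta where "eta = min 1 (\<delta> / (2 * exp 2))"
  have eta: "0 < eta" "eta \<le> 1" using \<open>\<delta> > 0\<close> by (auto simp: eta_def)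
  obtain u v where uv: "u \<in> l2" "v \<in> l2"
    "point_spectrum (diag_dom lam) (\<lambda>x i. diag_op lam x i + rank_one u v x i) = {}"
    "opnorm (rank_one u v) \<le> 4/3 * (eta * exp 2)"
    using exists_rank_one_perturbation_without_eigenvalues[OF assms eta] by blast
  have "eta * exp 2 \<le> \<delta> / (2 * exp 2) * exp 2"
    unfolding eta_def by (intro mult_right_mono) auto
  then have "eta * exp 2 \<le> \<delta> / 2" by simp
  then have "opnorm (rank_one u v) < \<delta>"
    using uv(4) \<open>\<delta> > 0\<close> by linarith
  then show "\<exists>u\<in>l2. \<exists>v\<in>l2. point_spectrum (diag_dom lam) (\<lambda>x i. diag_op lam x i + rank_one u v x i) = {}
      \<and> opnorm (rank_one u v) < \<delta>"
    using uv by blast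
qed

end
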